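(* Let $G$ be a group and $A$ an additive abelian group with a right $G$-action by group automorphisms. For every $n\in\mathbb Z_+$, $a\in A$ and $g_1,\dots,g_{n+1}\in G$, $$[D^{n+1}a](g_1,g_2,\dots,g_{n+1})=[D^n(a^{g_1})](g_2,\dots,g_{n+1})-[D^na](g_2,\dots,g_{n+1}).$$
   Context: Right action: $a\mapsto a^g$, $a^{\mathbf e}=a$, $(a^g)^h=a^{gh}$, additive in $a$; $\mathbf e$ is the identity of $G$. $\mathcal C^0(G,A)=A$; for $n\ge1$, $\mathcal C^n(G,A)$ consists of functions $G^n\to A$ vanishing whenever some argument is $\mathbf e$. For $n\ge1$, $(d_nc)(g_1,\dots,g_n)=[c(g_1,\dots,g_{n-1})]^{g_n}-c(g_1,\dots,g_{n-1})$; $D^0=\mathrm{id}_A$, $D^n=d_nD^{n-1}$ (so for $n=0$ the formula reads $[D^1a](g_1)=a^{g_1}-a$). *)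

theory Defs
  imports "HOL-Algebra.Group"
begin

definition right_action_auto :: "('g, 'm) monoid_scheme \<Rightarrow> ('a::ab_group_add \<Rightarrow> 'g \<Rightarrow> 'a) \<Rightarrow> bool" where
  "right_action_auto G act \<longleftrightarrow>
     (\<forall>a. act a \<one>\<^bsub>G\<^esub> = a) \<and>
     (\<forall>a. \<forall>g\<in>carrier G. \<forall>h\<in>carrier G. act (act a g) h = act a (g \<otimes>\<^bsub>G\<^esub> h)) \<and>
     (\<forall>a b. \<forall>g\<in>carrier G. act (a + b) g = act a g + act b g)"

(* Cochains G^n -> A are represented as functions on lists of group elements
   (only values at lists of length n with entries in carrier G matter).
   d_n c (g_1,...,g_n) = c(g_1,...,g_{n-1})^{g_n} - c(g_1,...,g_{n-1}). *)
definition cobd :: "('a::ab_group_add \<Rightarrow> 'g \<Rightarrow> 'a) \<Rightarrow> ('g list \<Rightarrow> 'a) \<Rightarrow> ('g list \<Rightarrow> 'a)" where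
  "cobd act c = (\<lambda>gs. act (c (butlast gs)) (last gs) - c (butlast gs))"

fun Dop :: "('a::ab_group_add \<Rightarrow> 'g \<Rightarrow> 'a) \<Rightarrow> nat \<Rightarrow> 'a \<Rightarrow> ('g list \<Rightarrow> 'a)" where
  "Dop act 0 a = (\<lambda>gs. a)"
| "Dop act (Suc n) a = cobd act (Dop act n a)"

end

theory Submission
  imports Defs
begin

(* D^(n+1) is defined by peeling off the last argument, while the claim peels off the
   first one. The two commute because each map a \<mapsto> a^h is additive, so the claim
   follows by induction on the arguments g_2, ..., g_(n+1) from the right. *)

lemma right_action_auto_diff:
  assumes "right_action_auto G act" "h \<in> carrier G"
  shows "act (x - y) h = act x h - act y h"
proof -
  have "act (x - y + y) h = act (x - y) h + act y h"
    using assms unfolding right_action_auto_def by blast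
  then show ?thesis by (simp add: algebra_simps)
qed

lemma Dop_Suc_snoc:
  "Dop act (Suc n) a (hs @ [h]) = act (Dop act n a hs) h - Dop act n a hs"
  by (simp add: cobd_def)

lemma Dop_Suc_Cons:
  assumes act_diff: "\<And>x y h. h \<in> set hs \<Longrightarrow> act (x - y) h = act x h - act y h"
  shows "Dop act (Suc (length hs)) a (g # hs)
           = Dop act (length hs) (act a g) hs - Dop act (length hs) a hs"
  using act_diff
proof (induction hs rule: rev_induct)
  case Nil
  then show ?case by (simp add: cobd_def)
next
  case (snoc h hs)
  let ?n = "length hs"
  have h_in: "h \<in> set (hs @ [h])" by simp
  have IH: "Dop act (Suc ?n) a (g # hs) = Dop act ?n (act a g) hs - Dop act ?n a hs"
    by (rule snoc.IH) (simp add: snoc.prems)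
  have "Dop act (Suc (Suc ?n)) a (g # hs @ [h]) = act (Dop act (Suc ?n) a (g # hs)) h - Dop act (Suc ?n) a (g # hs)"
    using Dop_Suc_snoc[of act "Suc ?n" a "g # hs" h] by (simp only: append_Cons)
  also have "\<dots> = (act (Dop act ?n (act a g) hs) h - Dop act ?n (act a g) hs)
                 - (act (Dop act ?n a hs) h - Dop act ?n a hs)"
    unfolding IH snoc.prems[OF h_in] by (simp add: algebra_simps)
  also have "\<dots> = Dop act (Suc ?n) (act a g) (hs @ [h]) - Dop act (Suc ?n) a (hs @ [h])"
    by (simp only: Dop_Suc_snoc)
  finally show ?case by (simp only: length_append_singleton)
qed

theorem lemma1p6:
  fixes G :: "('g, 'm) monoid_scheme"
    and act :: "'a::ab_group_add \<Rightarrow> 'g \<Rightarrow> 'a"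
    and n :: nat and a :: 'a and g :: 'g and hs :: "'g list"
  assumes "group G"
    and "right_action_auto G act"
    and "g \<in> carrier G"
    and "set hs \<subseteq> carrier G"
    and "length hs = n"
  shows "Dop act (Suc n) a (g # hs) = Dop act n (act a g) hs - Dop act n a hs"
proof -
  have "act (x - y) h = act x h - act y h" if "h \<in> set hs" for x y h
    using right_action_auto_diff[OF assms(2)] that assms(4) by blast
  then have "Dop act (Suc (length hs)) a (g # hs)
               = Dop act (length hs) (act a g) hs - Dop act (length hs) a hs"
    by (rule Dop_Suc_Cons)
  with assms(5) show ?thesis by simp
qed

end
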